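(* Let $(E,\mathcal{P})$ be a random locally convex module over $K$ with base $(\Omega,\mathcal{F},P)$. Then $E^{\ast}_{max}=E^{\ast}_{\varepsilon,\lambda}$; that is, a module homomorphism $f:E\to L^{0}(\mathcal{F},K)$ is continuous from $(E,\mathcal{T}_{c})$ to $(L^{0}(\mathcal{F},K),\mathcal{T}_{\varepsilon,\lambda})$ if and only if it is continuous from $(E,\mathcal{T}_{\varepsilon,\lambda})$ to $(L^{0}(\mathcal{F},K),\mathcal{T}_{\varepsilon,\lambda})$.
   Context: $(\Omega,\mathcal{F},P)$ is a probability space, $K=\mathbb{R}$ or $\mathbb{C}$, and $L^{0}(\mathcal{F},K)$ is the algebra of equivalence classes (modulo a.s. equality) of $K$-valued measurable random variables. $L^0(\mathcal F,\mathbb R)$ is ordered by $\xi\le\eta$ iff $\xi^0\le\eta^0$ a.s. for representatives; $L^{0}_{+}=\{\xi\in L^0(\mathcal F,\mathbb R):\xi\ge 0\}$, $L^{0}_{++}=\{\xi: \xi>0 \text{ a.s. on }\Omega\}$; $|\xi|$ is the pointwise absolute value. An $L^0$-seminorm on a left $L^0(\mathcal F,K)$-module $E$ is a map $\|\cdot\|:E\to L^0_+$ with $\|x+y\|\le\|x\|+\|y\|$ and $\|\xi x\|=|\xi|\,\|x\|$ for all $\xi\in L^0(\mathcal F,K)$, $x,y\in E$. A random locally convex module over $K$ with base $(\Omega,\mathcal F,P)$ is a pair $(E,\mathcal P)$ where $E$ is a left $L^0(\mathcal F,K)$-module and $\mathcal P$ is a family of $L^0$-seminorms on $E$ such that $\bigvee\{\|x\|:\|\cdot\|\in\mathcal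 P\}=0$ implies $x=0$. $\mathcal F(\mathcal P)$ denotes the set of finite subfamilies of $\mathcal P$, and for $\mathcal Q\in\mathcal F(\mathcal P)$, $\|x\|_{\mathcal Q}=\bigvee\{\|x\|:\|\cdot\|\in\mathcal Q\}$. The $(\varepsilon,\lambda)$-topology $\mathcal T_{\varepsilon,\lambda}$ on $E$ is the linear topology with local base at $0$ given by the sets $\{x\in E: P\{\omega:\|x\|_{\mathcal Q}(\omega)<\varepsilon\}>1-\lambda\}$, $\mathcal Q\in\mathcal F(\mathcal P)$, $\varepsilon>0$, $0<\lambda<1$. The locally $L^0$-convex topology $\mathcal T_c$ on $E$: $G\subset E$ is open iff for every $x\in G$ there are $\mathcal Q\in\mathcal F(\mathcal P)$ and $\varepsilon\in L^0_{++}$ with $x+\{y:\|y\|_{\mathcal Q}\le\varepsilon\}\subset G$. $L^0(\mathcal F,K)$ itself is regarded as a random locally convex module with $\mathcal P=\{|\cdot|\}$; then $\mathcal T_{\varepsilon,\lambda}$ on it is the topology of convergence in probability. Module homomorphism means $L^0(\mathcal F,K)$-linear map. $E^\ast_{\varepsilon,\lambda}$ is the set of module homomorphisms $f:E\to L^0(\mathcal F,K)$ continuous from $(E,\mathcal T_{\varepsilon,\lambda})$ to $(L^0(\mathcal F,K),\mathcal T_{\varepsilon,\lambda})$; $E^\ast_{max}$ is the set of module homomorphisms continuous from $(E,\mathcal T_{c})$ to $(L^0(\mathcal F,K),\mathcal T_{\varepsilon,\lambda})$. *)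

theory Defs
  imports "HOL-Probability.Probability"
begin

text \<open>Elements of L0(F,K) are represented by measurable representatives
  \<open>'a \<Rightarrow> 'k\<close>; statements about L0 equality / order are made almost surely.\<close>

definition L0 :: "'a measure \<Rightarrow> ('a \<Rightarrow> 'k::real_normed_field) set" where
  "L0 M = borel_measurable M"

definition ae_eq :: "'a measure \<Rightarrow> ('a \<Rightarrow> 'b) \<Rightarrow> ('a \<Rightarrow> 'b) \<Rightarrow> bool" where
  "ae_eq M f g \<longleftrightarrow> (AE \<omega> in M. f \<omega> = g \<omega>)"

definition L0_module ::
  "'a measure \<Rightarrow> (('a \<Rightarrow> 'k::real_normed_field) \<Rightarrow> 'e::ab_group_add \<Rightarrow> 'e) \<Rightarrow> bool" where
  "L0_module M scal \<longleftrightarrow>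
     (\<forall>\<xi>\<in>L0 M. \<forall>\<eta>\<in>L0 M. \<forall>x. ae_eq M \<xi> \<eta> \<longrightarrow> scal \<xi> x = scal \<eta> x) \<and>
     (\<forall>\<xi>\<in>L0 M. \<forall>x y. scal \<xi> (x + y) = scal \<xi> x + scal \<xi> y) \<and>
     (\<forall>\<xi>\<in>L0 M. \<forall>\<eta>\<in>L0 M. \<forall>x. scal (\<lambda>\<omega>. \<xi> \<omega> + \<eta> \<omega>) x = scal \<xi> x + scal \<eta> x) \<and>
     (\<forall>\<xi>\<in>L0 M. \<forall>\<eta>\<in>L0 M. \<forall>x. scal (\<lambda>\<omega>. \<xi> \<omega> * \<eta> \<omega>) x = scal \<xi> (scal \<eta> x)) \<and>
     (\<forall>x. scal (\<lambda>\<omega>. 1) x = x)"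

definition L0_seminorm ::
  "'a measure \<Rightarrow> (('a \<Rightarrow> 'k::real_normed_field) \<Rightarrow> 'e::ab_group_add \<Rightarrow> 'e)
     \<Rightarrow> ('e \<Rightarrow> 'a \<Rightarrow> real) \<Rightarrow> bool" where
  "L0_seminorm M scal p \<longleftrightarrow>
     (\<forall>x. p x \<in> borel_measurable M \<and> (AE \<omega> in M. 0 \<le> p x \<omega>)) \<and>
     (\<forall>x y. AE \<omega> in M. p (x + y) \<omega> \<le> p x \<omega> + p y \<omega>) \<and>
     (\<forall>\<xi>\<in>L0 M. \<forall>x. AE \<omega> in M. p (scal \<xi> x) \<omega> = norm (\<xi> \<omega>) * p x \<omega>)"

text \<open>The separation axiom
  \<open>\<Or>{\<parallel>x\<parallel> : \<parallel>.\<parallel> \<in> P} = 0 \<Longrightarrow> x = 0\<close> is written out: since all the seminorm values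
  are nonnegative, the supremum is 0 iff every \<open>\<parallel>x\<parallel>\<close> is 0 a.s.\<close>
definition RLC_module ::
  "'a measure \<Rightarrow> (('a \<Rightarrow> 'k::real_normed_field) \<Rightarrow> 'e::ab_group_add \<Rightarrow> 'e)
     \<Rightarrow> ('e \<Rightarrow> 'a \<Rightarrow> real) set \<Rightarrow> bool" where
  "RLC_module M scal \<P> \<longleftrightarrow>
     prob_space M \<and> L0_module M scal \<and> (\<forall>p\<in>\<P>. L0_seminorm M scal p) \<and>
     (\<forall>x. (\<forall>p\<in>\<P>. AE \<omega> in M. p x \<omega> = 0) \<longrightarrow> x = 0)"

definition fin_sub :: "'s set \<Rightarrow> 's set \<Rightarrow> bool" where
  "fin_sub \<P> Q \<longleftrightarrow> finite Q \<and> Q \<noteq> {} \<and> Q \<subseteq> \<P>"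

definition qnorm :: "('e \<Rightarrow> 'a \<Rightarrow> real) set \<Rightarrow> 'e \<Rightarrow> 'a \<Rightarrow> real" where
  "qnorm Q x \<omega> = Max ((\<lambda>p. p x \<omega>) ` Q)"

definition open_el :: "'a measure \<Rightarrow> ('e::ab_group_add \<Rightarrow> 'a \<Rightarrow> real) set \<Rightarrow> 'e set \<Rightarrow> bool" where
  "open_el M \<P> G \<longleftrightarrow>
     (\<forall>x\<in>G. \<exists>Q \<epsilon> lam. fin_sub \<P> Q \<and> 0 < \<epsilon> \<and> 0 < lam \<and> lam < 1 \<and>
        (\<forall>y. measure M {\<omega> \<in> space M. qnorm Q y \<omega> < \<epsilon>} > 1 - lam \<longrightarrow> x + y \<in> G))"

definition open_c :: "'a measure \<Rightarrow> ('e::ab_group_add \<Rightarrow> 'a \<Rightarrow> real) set \<Rightarrow> 'e set \<Rightarrow> bool" where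
  "open_c M \<P> G \<longleftrightarrow>
     (\<forall>x\<in>G. \<exists>Q \<epsilon>. fin_sub \<P> Q \<and> \<epsilon> \<in> borel_measurable M \<and> (AE \<omega> in M. 0 < \<epsilon> \<omega>) \<and>
        (\<forall>y. (AE \<omega> in M. qnorm Q y \<omega> \<le> \<epsilon> \<omega>) \<longrightarrow> x + y \<in> G))"

text \<open>Open sets of the (\<epsilon>,\<lambda>)-topology (convergence in probability) on L0(F,K),
  with \<P> = {|.|}; open sets are subsets of L0 (automatically saturated under a.s. equality).\<close>
definition open_L0 :: "'a measure \<Rightarrow> ('a \<Rightarrow> 'k::real_normed_field) set \<Rightarrow> bool" where
  "open_L0 M G \<longleftrightarrow> G \<subseteq> L0 M \<and>
     (\<forall>\<xi>\<in>G. \<exists>\<epsilon> lam. 0 < \<epsilon> \<and> 0 < lam \<and> lam < 1 \<and>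
        (\<forall>\<eta>\<in>L0 M. measure M {\<omega> \<in> space M. norm (\<eta> \<omega> - \<xi> \<omega>) < \<epsilon>} > 1 - lam \<longrightarrow> \<eta> \<in> G))"

definition L0_module_hom ::
  "'a measure \<Rightarrow> (('a \<Rightarrow> 'k::real_normed_field) \<Rightarrow> 'e::ab_group_add \<Rightarrow> 'e) \<Rightarrow> ('e \<Rightarrow> 'a \<Rightarrow> 'k) \<Rightarrow> bool" where
  "L0_module_hom M scal f \<longleftrightarrow>
     (\<forall>x. f x \<in> L0 M) \<and>
     (\<forall>x y. ae_eq M (f (x + y)) (\<lambda>\<omega>. f x \<omega> + f y \<omega>)) \<and>
     (\<forall>\<xi>\<in>L0 M. \<forall>x. ae_eq M (f (scal \<xi> x)) (\<lambda>\<omega>. \<xi> \<omega> * f x \<omega>))"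

definition cont_wrt :: "('x set \<Rightarrow> bool) \<Rightarrow> ('y set \<Rightarrow> bool) \<Rightarrow> ('x \<Rightarrow> 'y) \<Rightarrow> bool" where
  "cont_wrt openS openT f \<longleftrightarrow> (\<forall>G. openT G \<longrightarrow> openS {x. f x \<in> G})"

end

theory Submission
  imports Defs
begin

(* Every T_(eps,lam)-open set is T_c-open: a probabilistic neighbourhood
   {y. P(||y||_Q < eps) > 1 - lam} contains the L0-ball {y. ||y||_Q <= eps/2 a.s.}.
   Hence T_c is finer, and (eps,lam)-continuity implies T_c-continuity.

   Conversely, let f be T_c-continuous.  The preimage of the probabilistic
   neighbourhood {eta. P(|eta| < delta - e) > 1 - lam for some e > 0} of 0 is T_c-open,
   so it contains an L0-ball {y. ||y||_Q <= eps0 a.s.} with eps0 > 0 a.s.  Truncating an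
   arbitrary y to the event A = {||y||_Q <= eps0}, i.e. passing to z = 1_A y, puts z into
   this ball while f z = f y on A; this yields P(|f y| < delta) > P(A) - lam for all y.
   Since eps0 > 0 a.s., some constant c > 0 satisfies c <= eps0 with probability close
   to 1, so P(||y||_Q < c) close to 1 forces P(A), hence P(|f y| < delta), close to 1.
   Translating by x (f (x + y) - f x = f y a.s.) gives (eps,lam)-continuity. *)

lemma (in prob_space) prob_Int_ge:
  assumes "A \<in> events" "B \<in> events"
  shows "prob A + prob B - 1 \<le> prob (A \<inter> B)"
proof -
  have "prob (A \<union> B) \<le> 1" by simp
  moreover have "prob (A \<union> B) = prob A + prob B - prob (A \<inter> B)"
    using assms by (simp add: finite_measure_Union' finite_measure_Diff' Int_commute)
  ultimately show ?thesis by linarith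
qed

text \<open>A random variable that is a.s. strictly positive exceeds some positive constant
  with probability arbitrarily close to one (continuity of measure from below).\<close>
lemma (in prob_space) positive_rv_bounded_below:
  fixes \<epsilon> :: "'a \<Rightarrow> real"
  assumes meas: "\<epsilon> \<in> borel_measurable M" and pos: "AE \<omega> in M. 0 < \<epsilon> \<omega>" and "0 < lam"
  obtains c where "0 < c" "prob {\<omega> \<in> space M. c \<le> \<epsilon> \<omega>} > 1 - lam"
proof -
  define A where "A n = {\<omega> \<in> space M. 1 / real (Suc n) \<le> \<epsilon> \<omega>}" for n
  have A_events: "range A \<subseteq> events" unfolding A_def using meas by auto
  have "incseq A"
    unfolding A_def incseq_def by (auto intro: order_trans[rotated] simp: frac_le)
  then have "(\<lambda>n. prob (A n)) \<longlonglongrightarrow> prob (\<Union>n. A n)"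
    using A_events by (rule finite_Lim_measure_incseq[rotated])
  moreover have "prob (\<Union>n. A n) = 1"
  proof (rule prob_eq_1[THEN iffD2])
    show "(\<Union>n. A n) \<in> events" using A_events by auto
    show "AE \<omega> in M. \<omega> \<in> (\<Union>n. A n)"
      using pos AE_space
    proof eventually_elim
      case (elim \<omega>)
      then obtain n where "inverse (real (Suc n)) < \<epsilon> \<omega>" using reals_Archimedean by blast
      then show ?case unfolding A_def using elim by (auto simp: divide_inverse intro!: exI[of _ n])
    qed
  qed
  ultimately have "eventually (\<lambda>n. prob (A n) > 1 - lam) sequentially"
    using \<open>0 < lam\<close> by (intro order_tendstoD(1)) auto
  then obtain n where "prob (A n) > 1 - lam" by (metis eventually_sequentially order_refl)
  then show thesis using that[of "1 / real (Suc n)"] unfolding A_def by simp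
qed

text \<open>The set of random variables that are smaller than \<open>\<delta>\<close> with probability
  exceeding \<open>1 - lam\<close>, with some room \<open>e\<close> to spare; the spare room makes it open.\<close>
definition small_in_prob :: "'a measure \<Rightarrow> real \<Rightarrow> real \<Rightarrow> ('a \<Rightarrow> 'k::real_normed_field) set" where
  "small_in_prob M \<delta> lam =
     {\<eta> \<in> L0 M. \<exists>e>0. measure M {\<omega> \<in> space M. norm (\<eta> \<omega>) < \<delta> - e} > 1 - lam}"

text \<open>These sets are open for convergence in probability: a random variable close to one
  of them in probability (within \<open>e/2\<close>) stays in it, by Bonferroni.\<close>
lemma (in prob_space) open_L0_small_in_prob:
  assumes "lam < 1"
  shows "open_L0 M (small_in_prob M \<delta> lam :: ('a \<Rightarrow> 'k::{real_normed_field, second_countable_topology}) set)"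
  unfolding open_L0_def
proof (intro conjI ballI)
  show "small_in_prob M \<delta> lam \<subseteq> L0 M" unfolding small_in_prob_def by blast
  fix \<xi> :: "'a \<Rightarrow> 'k" assume "\<xi> \<in> small_in_prob M \<delta> lam"
  then obtain e where xi: "\<xi> \<in> borel_measurable M" and "e > 0"
    and big: "prob {\<omega> \<in> space M. norm (\<xi> \<omega>) < \<delta> - e} > 1 - lam"
    unfolding small_in_prob_def L0_def by blast
  let ?A = "{\<omega> \<in> space M. norm (\<xi> \<omega>) < \<delta> - e}"
  define \<gamma> where "\<gamma> = prob ?A - (1 - lam)"
  have "0 < \<gamma>" "\<gamma> < 1" using big assms prob_le_1[of ?A] unfolding \<gamma>_def by linarith+
  show "\<exists>\<epsilon> lam'. 0 < \<epsilon> \<and> 0 < lam' \<and> lam' < 1 \<and>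
      (\<forall>\<eta>\<in>L0 M. prob {\<omega> \<in> space M. norm (\<eta> \<omega> - \<xi> \<omega>) < \<epsilon>} > 1 - lam' \<longrightarrow>
        \<eta> \<in> small_in_prob M \<delta> lam)"
  proof (intro exI conjI ballI impI)
    show "0 < e / 2" "0 < \<gamma>" "\<gamma> < 1" using \<open>e > 0\<close> \<open>0 < \<gamma>\<close> \<open>\<gamma> < 1\<close> by auto
    fix \<eta> assume eta_L0: "\<eta> \<in> L0 M"
      and close: "prob {\<omega> \<in> space M. norm (\<eta> \<omega> - \<xi> \<omega>) < e / 2} > 1 - \<gamma>"
    have eta: "\<eta> \<in> borel_measurable M" using eta_L0 unfolding L0_def .
    let ?B = "{\<omega> \<in> space M. norm (\<eta> \<omega> - \<xi> \<omega>) < e / 2}"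
    let ?C = "{\<omega> \<in> space M. norm (\<eta> \<omega>) < \<delta> - e / 2}"
    have "(\<lambda>\<omega>. \<eta> \<omega> - \<xi> \<omega>) \<in> borel_measurable M" using eta xi by (rule borel_measurable_diff)
    then have events: "?A \<in> events" "?B \<in> events" "?C \<in> events" using xi eta by measurable
    have "?A \<inter> ?B \<subseteq> ?C"
    proof
      fix \<omega> assume "\<omega> \<in> ?A \<inter> ?B"
      moreover have "norm (\<eta> \<omega>) \<le> norm (\<xi> \<omega>) + norm (\<eta> \<omega> - \<xi> \<omega>)"
        using norm_triangle_ineq[of "\<xi> \<omega>" "\<eta> \<omega> - \<xi> \<omega>"] by simp
      ultimately show "\<omega> \<in> ?C" by auto
    qed
    then have "prob (?A \<inter> ?B) \<le> prob ?C" using events by (intro finite_measure_mono) auto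
    then have "prob ?C > 1 - lam"
      using prob_Int_ge[OF events(1,2)] close unfolding \<gamma>_def by linarith
    then show "\<eta> \<in> small_in_prob M \<delta> lam"
      unfolding small_in_prob_def using eta_L0 \<open>e > 0\<close> by (intro CollectI conjI exI[of _ "e / 2"]) auto
  qed
qed

lemma (in prob_space) null_in_small_in_prob:
  assumes "\<eta> \<in> L0 M" "AE \<omega> in M. \<eta> \<omega> = 0" "0 < \<delta>" "0 < lam"
  shows "\<eta> \<in> small_in_prob M \<delta> lam"
proof -
  let ?S = "{\<omega> \<in> space M. norm (\<eta> \<omega>) < \<delta> - \<delta> / 2}"
  have "?S \<in> events" using assms(1) unfolding L0_def by measurable
  moreover have "AE \<omega> in M. \<omega> \<in> ?S" using assms(2) AE_space by eventually_elim (use assms in auto)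
  ultimately have "prob ?S = 1" by (simp add: prob_eq_1)
  then show ?thesis unfolding small_in_prob_def using assms
    by (intro CollectI conjI exI[of _ "\<delta> / 2"]) auto
qed

lemma (in prob_space) small_in_prob_measure:
  assumes "\<eta> \<in> small_in_prob M \<delta> lam"
  shows "prob {\<omega> \<in> space M. norm (\<eta> \<omega>) < \<delta>} > 1 - lam"
proof -
  obtain e where eta: "\<eta> \<in> borel_measurable M" and "e > 0"
    and big: "prob {\<omega> \<in> space M. norm (\<eta> \<omega>) < \<delta> - e} > 1 - lam"
    using assms unfolding small_in_prob_def L0_def by blast
  have "prob {\<omega> \<in> space M. norm (\<eta> \<omega>) < \<delta> - e} \<le> prob {\<omega> \<in> space M. norm (\<eta> \<omega>) < \<delta>}"
    using eta \<open>e > 0\<close> by (intro finite_measure_mono) auto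
  with big show ?thesis by linarith
qed

lemma qnorm_measurable:
  assumes "fin_sub \<P> Q" "\<forall>p\<in>\<P>. L0_seminorm M scal p"
  shows "qnorm Q y \<in> borel_measurable M"
proof -
  have "\<And>p. p \<in> Q \<Longrightarrow> p y \<in> borel_measurable M"
    using assms unfolding fin_sub_def L0_seminorm_def by blast
  then have "(\<lambda>\<omega>. Max ((\<lambda>p. p y \<omega>) ` Q)) \<in> borel_measurable M"
    using assms(1) unfolding fin_sub_def by (intro borel_measurable_Max) auto
  then show ?thesis by (simp add: qnorm_def[abs_def])
qed

lemma qnorm_scal:
  assumes "fin_sub \<P> Q" "\<forall>p\<in>\<P>. L0_seminorm M scal p" "\<xi> \<in> L0 M"
  shows "AE \<omega> in M. qnorm Q (scal \<xi> x) \<omega> = norm (\<xi> \<omega>) * qnorm Q x \<omega>"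
proof -
  have Q: "finite Q" "Q \<noteq> {}" "Q \<subseteq> \<P>" using assms(1) unfolding fin_sub_def by auto
  have "\<And>p. p \<in> Q \<Longrightarrow> AE \<omega> in M. p (scal \<xi> x) \<omega> = norm (\<xi> \<omega>) * p x \<omega>"
    using assms(2,3) Q(3) unfolding L0_seminorm_def by blast
  then have "AE \<omega> in M. \<forall>p\<in>Q. p (scal \<xi> x) \<omega> = norm (\<xi> \<omega>) * p x \<omega>"
    by (rule AE_finite_allI[OF Q(1)])
  then show ?thesis
  proof eventually_elim
    case (elim \<omega>)
    have "mono (\<lambda>t::real. norm (\<xi> \<omega>) * t)" by (intro monoI mult_left_mono) auto
    then have "norm (\<xi> \<omega>) * qnorm Q x \<omega> = Max ((\<lambda>p. norm (\<xi> \<omega>) * p x \<omega>) ` Q)"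
      unfolding qnorm_def using Q by (subst mono_Max_commute) (auto simp: image_image)
    also have "\<dots> = qnorm Q (scal \<xi> x) \<omega>"
      unfolding qnorm_def using elim by (intro arg_cong[where f = Max] image_cong) auto
    finally show ?case by simp
  qed
qed

subsection \<open>\<open>T_c\<close> is finer than the (\<epsilon>,\<lambda>)-topology\<close>

text \<open>A set of probability-one bounds \<open>\<parallel>y\<parallel>_Q \<le> \<epsilon>/2\<close> lies inside the
  probabilistic neighbourhood \<open>P(\<parallel>y\<parallel>_Q < \<epsilon>) > 1 - lam\<close>.\<close>
lemma open_el_imp_open_c:
  assumes "RLC_module M scal \<P>" "open_el M \<P> G"
  shows "open_c M \<P> G"
  unfolding open_c_def
proof
  interpret prob_space M using assms(1) unfolding RLC_module_def by blast
  have seminorms: "\<forall>p\<in>\<P>. L0_seminorm M scal p" using assms(1) unfolding RLC_module_def by blast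
  fix x assume "x \<in> G"
  then obtain Q \<epsilon> lam where Q: "fin_sub \<P> Q" and "0 < \<epsilon>"
    and "0 < lam" and nbhd: "\<forall>y. prob {\<omega> \<in> space M. qnorm Q y \<omega> < \<epsilon>} > 1 - lam \<longrightarrow> x + y \<in> G"
    using assms(2) unfolding open_el_def by blast
  show "\<exists>Q \<epsilon>. fin_sub \<P> Q \<and> \<epsilon> \<in> borel_measurable M \<and> (AE \<omega> in M. 0 < \<epsilon> \<omega>) \<and>
      (\<forall>y. (AE \<omega> in M. qnorm Q y \<omega> \<le> \<epsilon> \<omega>) \<longrightarrow> x + y \<in> G)"
  proof (intro exI conjI allI impI)
    show "fin_sub \<P> Q" "(\<lambda>_. \<epsilon> / 2) \<in> borel_measurable M" "AE \<omega> in M. 0 < \<epsilon> / 2"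
      using Q \<open>0 < \<epsilon>\<close> by auto
    fix y assume ball: "AE \<omega> in M. qnorm Q y \<omega> \<le> \<epsilon> / 2"
    let ?S = "{\<omega> \<in> space M. qnorm Q y \<omega> < \<epsilon>}"
    have "?S \<in> events" using qnorm_measurable[OF Q seminorms] by measurable
    moreover have "AE \<omega> in M. \<omega> \<in> ?S" using ball AE_space by eventually_elim (use \<open>0 < \<epsilon>\<close> in auto)
    ultimately have "prob ?S = 1" by (simp add: prob_eq_1)
    then show "x + y \<in> G" using nbhd \<open>0 < lam\<close> by auto
  qed
qed

subsection \<open>\<open>T_c\<close>-continuity implies (\<epsilon>,\<lambda>)-continuity\<close>

text \<open>Localisation: if \<open>f\<close> maps the L0-ball \<open>\<parallel>y\<parallel>_Q \<le> \<epsilon>0\<close> into a probabilistic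
  neighbourhood, then for arbitrary \<open>y\<close> the bound survives on \<open>{\<parallel>y\<parallel>_Q \<le> \<epsilon>0}\<close>,
  by applying the hypothesis to the truncation \<open>1_A y\<close>.\<close>
lemma localize_ball:
  fixes scal :: "('a \<Rightarrow> 'k::real_normed_field) \<Rightarrow> 'e::ab_group_add \<Rightarrow> 'e"
  assumes "RLC_module M scal \<P>" "L0_module_hom M scal f"
    and Q: "fin_sub \<P> Q" and eps0: "\<epsilon>0 \<in> borel_measurable M" "AE \<omega> in M. 0 < \<epsilon>0 \<omega>"
    and ball: "\<forall>y. (AE \<omega> in M. qnorm Q y \<omega> \<le> \<epsilon>0 \<omega>) \<longrightarrow> f y \<in> small_in_prob M \<delta> lam"
  shows "measure M {\<omega> \<in> space M. norm (f y \<omega>) < \<delta>}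
           > measure M {\<omega> \<in> space M. qnorm Q y \<omega> \<le> \<epsilon>0 \<omega>} - lam"
proof -
  interpret prob_space M using assms(1) unfolding RLC_module_def by blast
  have seminorms: "\<forall>p\<in>\<P>. L0_seminorm M scal p" using assms(1) unfolding RLC_module_def by blast
  have f_meas: "\<And>x. f x \<in> borel_measurable M"
    using assms(2) unfolding L0_module_hom_def L0_def by blast
  define A where "A = {\<omega> \<in> space M. qnorm Q y \<omega> \<le> \<epsilon>0 \<omega>}"
  have A: "A \<in> events" unfolding A_def using qnorm_measurable[OF Q seminorms] eps0(1) by measurable
  define ind :: "'a \<Rightarrow> 'k" where "ind = (\<lambda>\<omega>. if \<omega> \<in> A then 1 else 0)"
  have ind: "ind \<in> L0 M" unfolding ind_def L0_def using A by measurable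
  define z where "z = scal ind y"
  have "AE \<omega> in M. qnorm Q z \<omega> \<le> \<epsilon>0 \<omega>"
    using qnorm_scal[OF Q seminorms ind, of y] eps0(2)
    by eventually_elim (auto simp: z_def ind_def A_def)
  then have "f z \<in> small_in_prob M \<delta> lam" using ball by blast
  then have fz_small: "prob {\<omega> \<in> space M. norm (f z \<omega>) < \<delta>} > 1 - lam"
    by (rule small_in_prob_measure)
  have fz: "AE \<omega> in M. f z \<omega> = ind \<omega> * f y \<omega>"
    using assms(2) ind unfolding L0_module_hom_def ae_eq_def z_def by blast
  let ?S = "{\<omega> \<in> space M. norm (f z \<omega>) < \<delta>}"
  let ?T = "{\<omega> \<in> space M. norm (f y \<omega>) < \<delta>}"
  have events: "?S \<in> events" "?T \<in> events" using f_meas[of z] f_meas[of y] by measurable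
  have "prob (?S \<inter> A) \<le> prob ?T"
    using fz events by (intro finite_measure_mono_AE) (auto simp: ind_def elim!: eventually_mono)
  then show ?thesis using prob_Int_ge[OF events(1) A] fz_small unfolding A_def by linarith
qed

lemma cont_c_at_zero:
  fixes scal :: "('a \<Rightarrow> 'k::{real_normed_field, second_countable_topology}) \<Rightarrow> 'e::ab_group_add \<Rightarrow> 'e"
  assumes "RLC_module M scal \<P>" "L0_module_hom M scal f"
    and cont: "cont_wrt (open_c M \<P>) (open_L0 M) f"
    and "0 < \<delta>" "0 < lam" "lam < 1"
  obtains Q \<epsilon>0 where "fin_sub \<P> Q" "\<epsilon>0 \<in> borel_measurable M" "AE \<omega> in M. 0 < \<epsilon>0 \<omega>"
    "\<And>y. measure M {\<omega> \<in> space M. norm (f y \<omega>) < \<delta>}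
           > measure M {\<omega> \<in> space M. qnorm Q y \<omega> \<le> \<epsilon>0 \<omega>} - lam"
proof -
  interpret prob_space M using assms(1) unfolding RLC_module_def by blast
  have f0: "f 0 \<in> L0 M" "AE \<omega> in M. f 0 \<omega> = 0"
    using assms(2) unfolding L0_module_hom_def ae_eq_def
    by (auto elim!: allE[of _ 0] elim: eventually_mono)
  have "open_c M \<P> {x. f x \<in> small_in_prob M \<delta> lam}"
    using cont open_L0_small_in_prob[OF \<open>lam < 1\<close>] unfolding cont_wrt_def by blast
  moreover have "0 \<in> {x. f x \<in> small_in_prob M \<delta> lam}"
    using null_in_small_in_prob[OF f0 \<open>0 < \<delta>\<close> \<open>0 < lam\<close>] by simp
  ultimately obtain Q \<epsilon>0 where "fin_sub \<P> Q" "\<epsilon>0 \<in> borel_measurable M" "AE \<omega> in M. 0 < \<epsilon>0 \<omega>"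
    "\<forall>y. (AE \<omega> in M. qnorm Q y \<omega> \<le> \<epsilon>0 \<omega>) \<longrightarrow> f y \<in> small_in_prob M \<delta> lam"
    unfolding open_c_def by fastforce
  then show thesis using that localize_ball[OF assms(1,2)] by blast
qed

text \<open>From continuity at 0 to (\<epsilon>,\<lambda>)-continuity: a constant \<open>c\<close> below \<open>\<epsilon>0\<close> with high
  probability turns the random radius into a deterministic one, and additivity of \<open>f\<close>
  translates the estimate from 0 to an arbitrary point \<open>x\<close>.\<close>
lemma cont_c_imp_cont_el:
  fixes scal :: "('a \<Rightarrow> 'k::{real_normed_field, second_countable_topology}) \<Rightarrow> 'e::ab_group_add \<Rightarrow> 'e"
  assumes "RLC_module M scal \<P>" "L0_module_hom M scal f"
    and cont: "cont_wrt (open_c M \<P>) (open_L0 M) f"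
  shows "cont_wrt (open_el M \<P>) (open_L0 M) f"
  unfolding cont_wrt_def open_el_def
proof (intro allI impI ballI)
  interpret prob_space M using assms(1) unfolding RLC_module_def by blast
  have seminorms: "\<forall>p\<in>\<P>. L0_seminorm M scal p" using assms(1) unfolding RLC_module_def by blast
  have f_L0: "\<And>x. f x \<in> L0 M" and f_add: "\<And>x y. AE \<omega> in M. f (x + y) \<omega> = f x \<omega> + f y \<omega>"
    using assms(2) unfolding L0_module_hom_def ae_eq_def by blast+
  fix G x assume "open_L0 M G" "x \<in> {x. f x \<in> G}"
  then obtain \<delta> lam where "0 < \<delta>" "0 < lam" "lam < 1"
    and nbhd: "\<forall>\<eta>\<in>L0 M. prob {\<omega> \<in> space M. norm (\<eta> \<omega> - f x \<omega>) < \<delta>} > 1 - lam \<longrightarrow> \<eta> \<in> G"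
    unfolding open_L0_def by fastforce
  obtain Q \<epsilon>0 where Q: "fin_sub \<P> Q" and eps0: "\<epsilon>0 \<in> borel_measurable M" "AE \<omega> in M. 0 < \<epsilon>0 \<omega>"
    and local: "\<And>y. prob {\<omega> \<in> space M. norm (f y \<omega>) < \<delta>}
                      > prob {\<omega> \<in> space M. qnorm Q y \<omega> \<le> \<epsilon>0 \<omega>} - lam / 2"
    using cont_c_at_zero[OF assms \<open>0 < \<delta>\<close>, of "lam / 2"] \<open>0 < lam\<close> \<open>lam < 1\<close> by auto
  obtain c where "0 < c" and c: "prob {\<omega> \<in> space M. c \<le> \<epsilon>0 \<omega>} > 1 - lam / 4"
    using positive_rv_bounded_below[OF eps0] \<open>0 < lam\<close> by (metis zero_less_divide_iff zero_less_numeral)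
  show "\<exists>Q \<epsilon> lam'. fin_sub \<P> Q \<and> 0 < \<epsilon> \<and> 0 < lam' \<and> lam' < 1 \<and>
      (\<forall>y. prob {\<omega> \<in> space M. qnorm Q y \<omega> < \<epsilon>} > 1 - lam' \<longrightarrow> x + y \<in> {x. f x \<in> G})"
  proof (intro exI conjI allI impI)
    show "fin_sub \<P> Q" "0 < c" "0 < lam / 4" "lam / 4 < 1" using Q \<open>0 < c\<close> \<open>0 < lam\<close> \<open>lam < 1\<close> by auto
    fix y assume small: "prob {\<omega> \<in> space M. qnorm Q y \<omega> < c} > 1 - lam / 4"
    let ?S = "{\<omega> \<in> space M. qnorm Q y \<omega> < c}"
    let ?C = "{\<omega> \<in> space M. c \<le> \<epsilon>0 \<omega>}"
    let ?A = "{\<omega> \<in> space M. qnorm Q y \<omega> \<le> \<epsilon>0 \<omega>}"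
    let ?T = "{\<omega> \<in> space M. norm (f (x + y) \<omega> - f x \<omega>) < \<delta>}"
    have qm: "qnorm Q y \<in> borel_measurable M" by (rule qnorm_measurable[OF Q seminorms])
    have events: "?S \<in> events" "?C \<in> events" "?A \<in> events" using qm eps0(1) by measurable
    have "prob (?S \<inter> ?C) \<le> prob ?A" using events by (intro finite_measure_mono) auto
    then have "prob ?A > 1 - lam / 2" using prob_Int_ge[OF events(1,2)] small c by linarith
    then have fy: "prob {\<omega> \<in> space M. norm (f y \<omega>) < \<delta>} > 1 - lam" using local[of y] by linarith
    have "?T \<in> events" using f_L0[of "x + y"] f_L0[of x] unfolding L0_def by measurable
    then have "prob {\<omega> \<in> space M. norm (f y \<omega>) < \<delta>} \<le> prob ?T"
      using f_add[of x y] by (intro finite_measure_mono_AE) (auto elim!: eventually_mono)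
    then show "x + y \<in> {x. f x \<in> G}" using nbhd f_L0 fy by fastforce
  qed
qed

theorem theorem1p1:
  fixes M :: "'a measure"
    and scal :: "('a \<Rightarrow> 'k::{real_normed_field, second_countable_topology}) \<Rightarrow> 'e::ab_group_add \<Rightarrow> 'e"
    and \<P> :: "('e \<Rightarrow> 'a \<Rightarrow> real) set"
    and f :: "'e \<Rightarrow> 'a \<Rightarrow> 'k"
  assumes "RLC_module M scal \<P>"
    and "L0_module_hom M scal f"
  shows "cont_wrt (open_c M \<P>) (open_L0 M) f \<longleftrightarrow> cont_wrt (open_el M \<P>) (open_L0 M) f"
proof
  assume "cont_wrt (open_c M \<P>) (open_L0 M) f"
  then show "cont_wrt (open_el M \<P>) (open_L0 M) f" by (rule cont_c_imp_cont_el[OF assms])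
next
  assume "cont_wrt (open_el M \<P>) (open_L0 M) f"
  then show "cont_wrt (open_c M \<P>) (open_L0 M) f"
    using open_el_imp_open_c[OF assms(1)] unfolding cont_wrt_def by blast
qed

end
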